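(* If $\mathfrak{g}$ is a product by generators, then $\dim\mathfrak{g}\ge 10$.
   Context: All Lie algebras are finite-dimensional, complex, nilpotent and nonabelian. Product by generators of two algebras $\mathfrak{g}_1,\mathfrak{g}_2$: take bases $\{X_1,\dots,X_{m_1}\}$, $\{X'_1,\dots,X'_{m_2}\}$ such that $X_1,\dots,X_{n_1}$ generate $\mathfrak{g}_1$ and $X_{n_1+1},\dots,X_{m_1}$ span $[\mathfrak{g}_1,\mathfrak{g}_1]$, and similarly for $\mathfrak{g}_2$ with $n_2$ generators; $\mathfrak{g}_1\underline{\times}\mathfrak{g}_2$ is the Lie algebra on $\mathfrak{g}_1\oplus\mathfrak{g}_2\oplus\langle Z_1,\dots,Z_{n_1n_2}\rangle$ with the brackets of $\mathfrak{g}_1$ and of $\mathfrak{g}_2$, $[X_i,X'_j]=Z_{(i-1)n_2+j}$ for $i\le n_1$, $j\le n_2$, $[X_i,X'_j]=0$ otherwise, and the $Z_k$ central. A nilpotent Lie algebra $\mathfrak{g}$ is a product by generators if there exist (nonabelian) subalgebras $\mathfrak{h}_1,\mathfrak{h}_2$ with $\mathfrak{g}\cong\mathfrak{h}_1\underline{\times}\mathfrak{h}_2$. *)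

theory Defs
  imports Complex_Main "HOL-Library.Function_Algebras" "HOL-Library.Product_Plus"
begin

text \<open>A complex Lie algebra is modelled as a pair (V, br) where V is a linear subspace
  of an ambient complex vector space (given by an explicit scalar multiplication sc
  satisfying the vector_space axioms) and br is a bracket closed on V.\<close>

definition lie_alg :: "(complex \<Rightarrow> 'a::ab_group_add \<Rightarrow> 'a) \<Rightarrow> 'a set \<Rightarrow> ('a \<Rightarrow> 'a \<Rightarrow> 'a) \<Rightarrow> bool" where
  "lie_alg sc V br \<longleftrightarrow>
     vector_space sc \<and> module.subspace sc V \<and>
     (\<exists>B. finite B \<and> B \<subseteq> V \<and> module.span sc B = V) \<and>
     (\<forall>x\<in>V. \<forall>y\<in>V. br x y \<in> V) \<and>
     (\<forall>x\<in>V. \<forall>y\<in>V. \<forall>z\<in>V. br (x + y) z = br x z + br y z) \<and>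
     (\<forall>x\<in>V. \<forall>y\<in>V. \<forall>c. br (sc c x) y = sc c (br x y)) \<and>
     (\<forall>x\<in>V. \<forall>y\<in>V. \<forall>z\<in>V. br x (y + z) = br x y + br x z) \<and>
     (\<forall>x\<in>V. \<forall>y\<in>V. \<forall>c. br x (sc c y) = sc c (br x y)) \<and>
     (\<forall>x\<in>V. br x x = 0) \<and>
     (\<forall>x\<in>V. \<forall>y\<in>V. \<forall>z\<in>V. br x (br y z) + br y (br z x) + br z (br x y) = 0)"

fun lcs :: "(complex \<Rightarrow> 'a::ab_group_add \<Rightarrow> 'a) \<Rightarrow> 'a set \<Rightarrow> ('a \<Rightarrow> 'a \<Rightarrow> 'a) \<Rightarrow> nat \<Rightarrow> 'a set" where
  "lcs sc V br 0 = V"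
| "lcs sc V br (Suc k) = module.span sc {br x y | x y. x \<in> V \<and> y \<in> lcs sc V br k}"

definition nilpotent_lie :: "(complex \<Rightarrow> 'a::ab_group_add \<Rightarrow> 'a) \<Rightarrow> 'a set \<Rightarrow> ('a \<Rightarrow> 'a \<Rightarrow> 'a) \<Rightarrow> bool" where
  "nilpotent_lie sc V br \<longleftrightarrow> (\<exists>k. lcs sc V br k = {0})"

definition nonabelian_lie :: "'a set \<Rightarrow> ('a \<Rightarrow> 'a \<Rightarrow> 'a::zero) \<Rightarrow> bool" where
  "nonabelian_lie V br \<longleftrightarrow> (\<exists>x\<in>V. \<exists>y\<in>V. br x y \<noteq> 0)"

definition derived :: "(complex \<Rightarrow> 'a::ab_group_add \<Rightarrow> 'a) \<Rightarrow> 'a set \<Rightarrow> ('a \<Rightarrow> 'a \<Rightarrow> 'a) \<Rightarrow> 'a set" where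
  "derived sc V br = module.span sc {br x y | x y. x \<in> V \<and> y \<in> V}"

definition is_subalgebra :: "(complex \<Rightarrow> 'a::ab_group_add \<Rightarrow> 'a) \<Rightarrow> 'a set \<Rightarrow> ('a \<Rightarrow> 'a \<Rightarrow> 'a) \<Rightarrow> 'a set \<Rightarrow> bool" where
  "is_subalgebra sc V br H \<longleftrightarrow> H \<subseteq> V \<and> module.subspace sc H \<and> (\<forall>x\<in>H. \<forall>y\<in>H. br x y \<in> H)"

definition gen_subalg :: "(complex \<Rightarrow> 'a::ab_group_add \<Rightarrow> 'a) \<Rightarrow> 'a set \<Rightarrow> ('a \<Rightarrow> 'a \<Rightarrow> 'a) \<Rightarrow> 'a set \<Rightarrow> 'a set" where
  "gen_subalg sc V br S = \<Inter>{H. is_subalgebra sc V br H \<and> S \<subseteq> H}"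

definition adapted_basis :: "(complex \<Rightarrow> 'a::ab_group_add \<Rightarrow> 'a) \<Rightarrow> 'a set \<Rightarrow> ('a \<Rightarrow> 'a \<Rightarrow> 'a) \<Rightarrow> 'a list \<Rightarrow> nat \<Rightarrow> bool" where
  "adapted_basis sc V br X n \<longleftrightarrow>
     distinct X \<and> \<not> module.dependent sc (set X) \<and> set X \<subseteq> V \<and> module.span sc (set X) = V \<and>
     n \<le> length X \<and>
     gen_subalg sc V br (set (take n X)) = V \<and>
     module.span sc (set (drop n X)) = derived sc V br"

definition coord :: "(complex \<Rightarrow> 'a::ab_group_add \<Rightarrow> 'a) \<Rightarrow> 'a list \<Rightarrow> nat \<Rightarrow> 'a \<Rightarrow> complex" where
  "coord sc X i x = module.representation sc (set X) x (X ! i)"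

text \<open>The product by generators g1 x g2 realised on triples (x1, x2, z) with x1 in g1,
  x2 in g2 and z in span{Z_0,...,Z_(n1*n2-1)} (z :: nat => complex with z k = 0 for
  k >= n1*n2). Indices are 0-based: [X_i, X'_j] = Z_(i*n2+j) for i < n1, j < n2.\<close>
definition pbg_sc :: "(complex \<Rightarrow> 'a::ab_group_add \<Rightarrow> 'a) \<Rightarrow> complex \<Rightarrow> 'a \<times> 'a \<times> (nat \<Rightarrow> complex) \<Rightarrow> 'a \<times> 'a \<times> (nat \<Rightarrow> complex)" where
  "pbg_sc sc c p = (sc c (fst p), sc c (fst (snd p)), (\<lambda>k. c * snd (snd p) k))"

definition pbg_carrier :: "'a set \<Rightarrow> 'a set \<Rightarrow> nat \<Rightarrow> nat \<Rightarrow> ('a \<times> 'a \<times> (nat \<Rightarrow> complex)) set" where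
  "pbg_carrier H1 H2 n1 n2 = {(x1, x2, z). x1 \<in> H1 \<and> x2 \<in> H2 \<and> (\<forall>k\<ge>n1 * n2. z k = 0)}"

definition pbg_br :: "(complex \<Rightarrow> 'a::ab_group_add \<Rightarrow> 'a) \<Rightarrow> ('a \<Rightarrow> 'a \<Rightarrow> 'a) \<Rightarrow> 'a list \<Rightarrow> nat \<Rightarrow> 'a list \<Rightarrow> nat \<Rightarrow>
    'a \<times> 'a \<times> (nat \<Rightarrow> complex) \<Rightarrow> 'a \<times> 'a \<times> (nat \<Rightarrow> complex) \<Rightarrow> 'a \<times> 'a \<times> (nat \<Rightarrow> complex)" where
  "pbg_br sc br X1 n1 X2 n2 p q =
     (case p of (x1, x2, _) \<Rightarrow> case q of (y1, y2, _) \<Rightarrow>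
       (br x1 y1, br x2 y2,
        (\<lambda>k. if k < n1 * n2 then
               coord sc X1 (k div n2) x1 * coord sc X2 (k mod n2) y2
             - coord sc X1 (k div n2) y1 * coord sc X2 (k mod n2) x2
             else 0)))"

definition lie_iso :: "(complex \<Rightarrow> 'a::ab_group_add \<Rightarrow> 'a) \<Rightarrow> 'a set \<Rightarrow> ('a \<Rightarrow> 'a \<Rightarrow> 'a) \<Rightarrow>
    (complex \<Rightarrow> 'b::ab_group_add \<Rightarrow> 'b) \<Rightarrow> 'b set \<Rightarrow> ('b \<Rightarrow> 'b \<Rightarrow> 'b) \<Rightarrow> bool" where
  "lie_iso sc V br sc' W br' \<longleftrightarrow>
     (\<exists>f. bij_betw f V W \<and>
          (\<forall>x\<in>V. \<forall>y\<in>V. f (x + y) = f x + f y) \<and>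
          (\<forall>x\<in>V. \<forall>c. f (sc c x) = sc' c (f x)) \<and>
          (\<forall>x\<in>V. \<forall>y\<in>V. f (br x y) = br' (f x) (f y)))"

definition product_by_generators :: "(complex \<Rightarrow> 'a::ab_group_add \<Rightarrow> 'a) \<Rightarrow> 'a set \<Rightarrow> ('a \<Rightarrow> 'a \<Rightarrow> 'a) \<Rightarrow> bool" where
  "product_by_generators sc V br \<longleftrightarrow>
     (\<exists>H1 H2 X1 n1 X2 n2.
        is_subalgebra sc V br H1 \<and> is_subalgebra sc V br H2 \<and>
        nonabelian_lie H1 br \<and> nonabelian_lie H2 br \<and>
        adapted_basis sc H1 br X1 n1 \<and> adapted_basis sc H2 br X2 n2 \<and>
        lie_iso sc V br (pbg_sc sc) (pbg_carrier H1 H2 n1 n2) (pbg_br sc br X1 n1 X2 n2))"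

end

theory Submission
  imports Defs
begin

(* In the product by generators the two adapted bases, together with the n1 * n2 new central
   vectors Z_k, are linearly independent, so dim g >= m1 + m2 + n1 * n2. In a nonabelian
   factor n_i >= 2, since a single element spans an abelian subalgebra, and m_i > n_i, since
   the derived algebra is nonzero. Hence dim g >= 3 + 3 + 2 * 2 = 10. *)

lemma sum_apply: "(sum f A) i = (\<Sum>x\<in>A. f x i :: 'b::comm_monoid_add)"
  by (induction A rule: infinite_finite_induct) auto

lemma (in module) independent_Un_if_span_Int_zero:
  assumes A: "independent A" and B: "independent B" and AB: "span A \<inter> span B \<subseteq> {0}"
  shows "independent (A \<union> B)"
  unfolding independent_explicit_module
proof (intro allI impI)
  fix t and u :: "'b \<Rightarrow> 'a" and v
  assume t: "finite t" "t \<subseteq> A \<union> B" and sum0: "(\<Sum>v\<in>t. u v *s v) = 0" and v: "v \<in> t"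
  define a where "a = (\<Sum>v\<in>t \<inter> A. u v *s v)"
  define b where "b = (\<Sum>v\<in>t - A. u v *s v)"
  have "a + b = 0"
    using sum.Int_Diff[OF t(1), of "\<lambda>v. u v *s v" A] sum0 by (simp add: a_def b_def)
  moreover have "a \<in> span A" unfolding a_def by (auto intro!: span_sum span_scale simp: span_base)
  moreover have "b \<in> span B" unfolding b_def using t(2) by (auto intro!: span_sum span_scale simp: span_base)
  ultimately have "a = 0" "b = 0"
    using AB span_neg[of b B] by (auto simp: add_eq_0_iff)
  then show "u v = 0"
    using independentD[OF A, of "t \<inter> A" u v] independentD[OF B, of "t - A" u v] t v
    by (auto simp: a_def b_def)
qed

definition prod_scale :: "('r \<Rightarrow> 'a \<Rightarrow> 'a) \<Rightarrow> ('r \<Rightarrow> 'b \<Rightarrow> 'b) \<Rightarrow> 'r \<Rightarrow> 'a \<times> 'b \<Rightarrow> 'a \<times> 'b"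
  where "prod_scale s1 s2 c p = (s1 c (fst p), s2 c (snd p))"

lemma module_prod_scale:
  assumes "module s1" and "module s2"
  shows "module (prod_scale s1 s2)"
proof -
  interpret m1: module s1 by fact
  interpret m2: module s2 by fact
  show ?thesis
    by unfold_locales
      (auto simp: prod_scale_def m1.scale_right_distrib m1.scale_left_distrib
                  m2.scale_right_distrib m2.scale_left_distrib)
qed

lemma independent_prod_scale_Un:
  assumes m1: "module s1" and m2: "module s2"
    and A: "module.independent s1 A" and B: "module.independent s2 B"
  shows "module.independent (prod_scale s1 s2) ((\<lambda>x. (x, 0)) ` A \<union> (\<lambda>y. (0, y)) ` B)"
proof -
  interpret P: module "prod_scale s1 s2" using module_prod_scale[OF m1 m2] .
  interpret h1: module_hom s1 "prod_scale s1 s2" "\<lambda>x. (x, 0)"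
    using m1 m2 P.module_axioms by (simp add: module_hom_iff prod_scale_def module.scale_zero_right)
  interpret h2: module_hom s2 "prod_scale s1 s2" "\<lambda>y. (0, y)"
    using m1 m2 P.module_axioms by (simp add: module_hom_iff prod_scale_def module.scale_zero_right)
  show ?thesis
  proof (rule P.independent_Un_if_span_Int_zero)
    show "P.independent ((\<lambda>x. (x, 0)) ` A)"
      using A by (rule h1.independent_injective_image) (simp add: inj_on_def)
    show "P.independent ((\<lambda>y. (0, y)) ` B)"
      using B by (rule h2.independent_injective_image) (simp add: inj_on_def)
    show "P.span ((\<lambda>x. (x, 0)) ` A) \<inter> P.span ((\<lambda>y. (0, y)) ` B) \<subseteq> {0}"
      by (auto simp: h1.span_image h2.span_image)
  qed
qed

lemma card_prod_embed_Un:
  assumes "finite A" and "finite B" and "0 \<notin> A"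
  shows "card ((\<lambda>x. (x, 0)) ` A \<union> (\<lambda>y. (0, y)) ` B) = card A + card B"
  using assms by (subst card_Un_disjoint) (auto simp: card_image inj_on_def)

definition unit_fun :: "'i \<Rightarrow> 'i \<Rightarrow> 'r::zero_neq_one"
  where "unit_fun i = (\<lambda>k. if k = i then 1 else 0)"

lemma unit_fun_eq_iff [simp]: "unit_fun i = unit_fun j \<longleftrightarrow> i = j"
  by (auto simp: unit_fun_def fun_eq_iff)

lemma module_pointwise_scale: "module (\<lambda>(c::'r::comm_ring_1) (z::'i \<Rightarrow> 'r) k. c * z k)"
  by unfold_locales (auto simp: algebra_simps)

lemma independent_unit_fun:
  "module.independent (\<lambda>(c::'r::comm_ring_1) (z::'i \<Rightarrow> 'r) k. c * z k) (unit_fun ` I)"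
  unfolding module.independent_explicit_module[OF module_pointwise_scale]
proof (intro allI impI)
  fix t and u :: "('i \<Rightarrow> 'r) \<Rightarrow> 'r" and v
  assume t: "finite t" "t \<subseteq> unit_fun ` I" and sum0: "(\<Sum>v\<in>t. (\<lambda>k. u v * v k)) = 0"
    and v: "v \<in> t"
  then obtain i where i: "v = unit_fun i" by blast
  have "0 = (\<Sum>w\<in>t. u w * w i)" using fun_cong[OF sum0, of i] by (simp add: sum_apply)
  also have "\<dots> = (\<Sum>w\<in>t. if w = v then u w else 0)"
  proof (rule sum.cong[OF refl])
    fix w assume "w \<in> t"
    then obtain j where "w = unit_fun j" using t(2) by blast
    then show "u w * w i = (if w = v then u w else 0)" by (simp add: i) (simp add: unit_fun_def)
  qed
  also have "\<dots> = u v" using t(1) v by simp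
  finally show "u v = 0" by simp
qed

lemma card_unit_fun: "card (unit_fun ` I) = card I"
  by (rule card_image) (simp add: inj_on_def)

lemma (in vector_space) card_le_dim_if_finite_span:
  assumes "finite B" "V \<subseteq> span B" "T \<subseteq> V" "independent T"
  shows "card T \<le> dim V"
proof -
  obtain C where C: "C \<subseteq> V" "independent C" "V \<subseteq> span C" "card C = dim V"
    by (rule basis_exists)
  have "finite C" using independent_span_bound[OF assms(1) C(2)] C(1) assms(2) by auto
  moreover have "T \<subseteq> span C" using assms(3) C(3) by blast
  ultimately have "card T \<le> card C" using independent_span_bound[OF _ assms(4)] by blast
  with C(4) show ?thesis by simp
qed

lemma map_sum_scale_on_subspace:
  fixes f :: "'b::ab_group_add \<Rightarrow> 'c::ab_group_add"
  assumes "module sc" and V: "module.subspace sc V"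
    and add: "\<forall>x\<in>V. \<forall>y\<in>V. f (x + y) = f x + f y"
    and scale: "\<forall>x\<in>V. \<forall>c. f (sc c x) = sc' c (f x)"
    and "finite t" "t \<subseteq> V"
  shows "f (\<Sum>v\<in>t. sc (u v) v) = (\<Sum>v\<in>t. sc' (u v) (f v))"
  using \<open>finite t\<close> \<open>t \<subseteq> V\<close>
proof (induction t rule: finite_induct)
  interpret module sc by fact
  case empty
  have "f (0 + 0) = f 0 + f 0" using add subspace_0[OF V] by blast
  then show ?case by simp
next
  interpret module sc by fact
  case (insert a t)
  then have a: "a \<in> V" and t: "t \<subseteq> V" by auto
  have sum_t: "(\<Sum>v\<in>t. sc (u v) v) \<in> V"
    using t by (intro subspace_sum[OF V] subspace_scale[OF V]) auto
  have "f (\<Sum>v\<in>insert a t. sc (u v) v) = f (sc (u a) a + (\<Sum>v\<in>t. sc (u v) v))"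
    using insert.hyps by simp
  also have "\<dots> = f (sc (u a) a) + f (\<Sum>v\<in>t. sc (u v) v)"
    using add subspace_scale[OF V a] sum_t by blast
  also have "\<dots> = sc' (u a) (f a) + (\<Sum>v\<in>t. sc' (u v) (f v))"
    using scale a insert.IH[OF t] by simp
  finally show ?case using insert.hyps by simp
qed

lemma independent_if_image_independent:
  fixes sc :: "'r::comm_ring_1 \<Rightarrow> 'b::ab_group_add \<Rightarrow> 'b"
    and f :: "'b \<Rightarrow> 'c::ab_group_add"
  assumes "module sc" "module sc'" and V: "module.subspace sc V"
    and add: "\<forall>x\<in>V. \<forall>y\<in>V. f (x + y) = f x + f y"
    and scale: "\<forall>x\<in>V. \<forall>c. f (sc c x) = sc' c (f x)"
    and T: "T \<subseteq> V" and inj: "inj_on f T" and indep: "module.independent sc' (f ` T)"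
  shows "module.independent sc T"
  unfolding module.independent_explicit_module[OF \<open>module sc\<close>]
proof (intro allI impI)
  fix t and u :: "'b \<Rightarrow> 'r" and v
  assume t: "finite t" "t \<subseteq> T" and sum0: "(\<Sum>v\<in>t. sc (u v) v) = 0" and v: "v \<in> t"
  have inj_t: "inj_on f t" using inj_on_subset[OF inj t(2)] .
  have "t \<subseteq> V" using t(2) T by blast
  have "(\<Sum>v\<in>t. sc' (u v) (f v)) = f (\<Sum>v\<in>t. sc (u v) v)"
    using map_sum_scale_on_subspace[OF assms(1) V add scale t(1) \<open>t \<subseteq> V\<close>] by (rule sym)
  also have "\<dots> = f (\<Sum>v\<in>{}. sc (u v) v)" using sum0 by simp
  also have "\<dots> = 0"
    using map_sum_scale_on_subspace[OF assms(1) V add scale, of "{}"] by simp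
  finally have "(\<Sum>v\<in>t. sc' (u v) (f v)) = 0" .
  then have "(\<Sum>w\<in>f ` t. sc' (u (inv_into t f w)) w) = 0"
    using inj_t by (simp add: sum.reindex)
  then have "u (inv_into t f (f v)) = 0"
    using module.independentD[OF assms(2) indep, of "f ` t" "\<lambda>w. u (inv_into t f w)" "f v"] t v
    by auto
  then show "u v = 0" using inj_t v by simp
qed

lemma card_independent_le_dim_if_linear_bij:
  assumes "vector_space sc" "module sc'" and V: "module.subspace sc V"
    and B: "finite B" "V \<subseteq> module.span sc B"
    and f: "bij_betw f V W"
    and add: "\<forall>x\<in>V. \<forall>y\<in>V. f (x + y) = f x + f y"
    and scale: "\<forall>x\<in>V. \<forall>c. f (sc c x) = sc' c (f x)"
    and S: "S \<subseteq> W" "module.independent sc' S"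
  shows "card S \<le> vector_space.dim sc V"
proof -
  interpret vector_space sc by fact
  define T where "T = inv_into V f ` S"
  have S_img: "S \<subseteq> f ` V" using S(1) f by (simp add: bij_betw_def)
  have T: "T \<subseteq> V" using S_img by (auto simp: T_def inv_into_into)
  have "f ` T = (\<lambda>x. f (inv_into V f x)) ` S" by (simp add: T_def image_image)
  also have "\<dots> = (\<lambda>x. x) ` S" using S_img by (intro image_cong) (auto simp: f_inv_into_f)
  finally have fT: "f ` T = S" by simp
  have inj: "inj_on f T" using inj_on_subset[OF bij_betw_imp_inj_on[OF f] T] .
  have "independent T"
    using independent_if_image_independent[OF module_axioms assms(2) V add scale T inj] fT S(2)
    by simp
  then have "card T \<le> dim V" using card_le_dim_if_finite_span[OF B T] by simp
  moreover have "card T = card S" using S_img by (simp add: T_def card_image inj_on_inv_into)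
  ultimately show ?thesis by simp
qed

lemma lie_bracket_span_singleton:
  assumes la: "lie_alg sc V br" and a: "a \<in> V"
    and p: "p \<in> module.span sc {a}" and q: "q \<in> module.span sc {a}"
  shows "br p q = 0"
proof -
  interpret vector_space sc using la by (simp add: lie_alg_def)
  have V: "subspace V" using la by (simp add: lie_alg_def)
  obtain c d where "p = sc c a" "q = sc d a" using p q by (auto simp: span_singleton)
  moreover have "br (sc c a) (sc d a) = sc c (sc d (br a a))"
    using la a subspace_scale[OF V a] by (simp add: lie_alg_def)
  moreover have "br a a = 0" using la a by (simp add: lie_alg_def)
  ultimately show ?thesis by simp
qed

lemma gen_subalg_subset_span_singleton:
  assumes la: "lie_alg sc V br" and H: "is_subalgebra sc V br H"
    and a: "a \<in> H" and S: "S \<subseteq> {a}"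
  shows "gen_subalg sc H br S \<subseteq> module.span sc {a}"
proof -
  interpret vector_space sc using la by (simp add: lie_alg_def)
  have aV: "a \<in> V" using H a by (auto simp: is_subalgebra_def)
  have "span {a} \<subseteq> H" using H a by (intro span_minimal) (auto simp: is_subalgebra_def)
  then have "is_subalgebra sc H br (span {a})"
    using lie_bracket_span_singleton[OF la aV] by (simp add: is_subalgebra_def span_zero)
  moreover have "S \<subseteq> span {a}" using S span_base by blast
  ultimately show ?thesis unfolding gen_subalg_def by blast
qed

lemma adapted_basis_generators_less_length:
  assumes "module sc" and "nonabelian_lie H br" and X: "adapted_basis sc H br X n"
  shows "n < length X"
proof (rule ccontr)
  interpret module sc by fact
  assume "\<not> n < length X"
  then have "derived sc H br = {0}" using X by (simp add: adapted_basis_def)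
  moreover obtain x y where "x \<in> H" "y \<in> H" "br x y \<noteq> 0"
    using \<open>nonabelian_lie H br\<close> by (auto simp: nonabelian_lie_def)
  then have "br x y \<in> derived sc H br" unfolding derived_def by (intro span_base) blast
  ultimately show False using \<open>br x y \<noteq> 0\<close> by simp
qed

lemma adapted_basis_two_le_generators:
  assumes la: "lie_alg sc V br" and H: "is_subalgebra sc V br H"
    and nonab: "nonabelian_lie H br" and X: "adapted_basis sc H br X n"
  shows "2 \<le> n"
proof (rule ccontr)
  interpret vector_space sc using la by (simp add: lie_alg_def)
  assume "\<not> 2 \<le> n"
  have "n < length X" by (rule adapted_basis_generators_less_length[OF module_axioms nonab X])
  define a where "a = X ! 0"
  have "set X \<subseteq> H" using X by (simp add: adapted_basis_def)
  moreover have "a \<in> set X" using \<open>n < length X\<close> unfolding a_def by (cases X) auto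
  ultimately have aH: "a \<in> H" by blast
  have aV: "a \<in> V" using H aH by (auto simp: is_subalgebra_def)
  have "n = 0 \<or> n = 1" using \<open>\<not> 2 \<le> n\<close> by arith
  then have "set (take n X) \<subseteq> {a}" by (cases X) (auto simp: a_def)
  then have "gen_subalg sc H br (set (take n X)) \<subseteq> span {a}"
    by (rule gen_subalg_subset_span_singleton[OF la H aH])
  then have "H \<subseteq> span {a}" using X by (simp add: adapted_basis_def)
  then show False
    using nonab lie_bracket_span_singleton[OF la aV] by (auto simp: nonabelian_lie_def)
qed

lemma pbg_sc_eq_prod_scale: "pbg_sc sc = prod_scale sc (prod_scale sc (\<lambda>c z k. c * z k))"
  by (simp add: fun_eq_iff pbg_sc_def prod_scale_def)

lemma module_pbg_sc: "vector_space sc \<Longrightarrow> module (pbg_sc sc)"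
  unfolding pbg_sc_eq_prod_scale module_iff_vector_space[symmetric]
  by (intro module_prod_scale module_pointwise_scale)

lemma pbg_carrier_independent_set:
  assumes "vector_space sc" and H1: "module.subspace sc H1" and H2: "module.subspace sc H2"
    and A: "A \<subseteq> H1" "finite A" "module.independent sc A"
    and B: "B \<subseteq> H2" "finite B" "module.independent sc B"
  obtains S where "S \<subseteq> pbg_carrier H1 H2 n1 n2" "module.independent (pbg_sc sc) S"
    "card S = card A + card B + n1 * n2"
proof
  interpret vector_space sc by fact
  define Z :: "(nat \<Rightarrow> complex) set" where "Z = unit_fun ` {..<n1 * n2}"
  define S where "S = (\<lambda>x. (x, 0)) ` A \<union> (\<lambda>y. (0, y)) ` ((\<lambda>x. (x, 0)) ` B \<union> (\<lambda>z. (0, z)) ` Z)"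
  show "S \<subseteq> pbg_carrier H1 H2 n1 n2"
    using A(1) B(1) subspace_0[OF H1] subspace_0[OF H2]
    by (auto simp: S_def Z_def pbg_carrier_def unit_fun_def zero_prod_def)
  have "module.independent (prod_scale sc (\<lambda>c z k. c * z k)) ((\<lambda>x. (x, 0)) ` B \<union> (\<lambda>z. (0, z)) ` Z)"
    unfolding Z_def
    by (rule independent_prod_scale_Un[OF module_axioms module_pointwise_scale B(3) independent_unit_fun])
  then show "module.independent (pbg_sc sc) S"
    unfolding pbg_sc_eq_prod_scale S_def
    by (rule independent_prod_scale_Un[OF module_axioms
          module_prod_scale[OF module_axioms module_pointwise_scale] A(3)])
  have "0 \<notin> A" "0 \<notin> B" using A(3) B(3) dependent_zero by blast+
  then show "card S = card A + card B + n1 * n2"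
    using A(2) B(2) by (simp add: S_def Z_def card_prod_embed_Un card_unit_fun)
qed

lemma lie_iso_pbg_dim_ge:
  assumes la: "lie_alg sc V br"
    and H: "is_subalgebra sc V br H1" "is_subalgebra sc V br H2"
    and X: "adapted_basis sc H1 br X1 n1" "adapted_basis sc H2 br X2 n2"
    and iso: "lie_iso sc V br (pbg_sc sc) (pbg_carrier H1 H2 n1 n2) (pbg_br sc br X1 n1 X2 n2)"
  shows "length X1 + length X2 + n1 * n2 \<le> vector_space.dim sc V"
proof -
  interpret vector_space sc using la by (simp add: lie_alg_def)
  obtain B where V: "subspace V" and B: "finite B" "V \<subseteq> span B"
    using la unfolding lie_alg_def by blast
  obtain f where f: "bij_betw f V (pbg_carrier H1 H2 n1 n2)"
    "\<forall>x\<in>V. \<forall>y\<in>V. f (x + y) = f x + f y" "\<forall>x\<in>V. \<forall>c. f (sc c x) = pbg_sc sc c (f x)"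
    using iso unfolding lie_iso_def by blast
  obtain S where S: "S \<subseteq> pbg_carrier H1 H2 n1 n2" "module.independent (pbg_sc sc) S"
    "card S = length X1 + length X2 + n1 * n2"
    using pbg_carrier_independent_set[OF vector_space_axioms, of H1 H2 "set X1" "set X2" n1 n2] H X
    by (auto simp: is_subalgebra_def adapted_basis_def distinct_card)
  have "card S \<le> dim V"
    by (rule card_independent_le_dim_if_linear_bij[OF vector_space_axioms
          module_pbg_sc[OF vector_space_axioms] V B f S(1,2)])
  with S(3) show ?thesis by simp
qed

theorem mainTheorem7:
  fixes sc :: "complex \<Rightarrow> 'a::ab_group_add \<Rightarrow> 'a"
    and V :: "'a set" and br :: "'a \<Rightarrow> 'a \<Rightarrow> 'a"
  assumes "lie_alg sc V br"
    and "nilpotent_lie sc V br"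
    and "nonabelian_lie V br"
    and "product_by_generators sc V br"
  shows "vector_space.dim sc V \<ge> 10"
proof -
  note la = \<open>lie_alg sc V br\<close>
  have "module sc" using la by (simp add: lie_alg_def module_iff_vector_space)
  obtain H1 H2 X1 n1 X2 n2 where
    H: "is_subalgebra sc V br H1" "is_subalgebra sc V br H2"
    and nonab: "nonabelian_lie H1 br" "nonabelian_lie H2 br"
    and X: "adapted_basis sc H1 br X1 n1" "adapted_basis sc H2 br X2 n2"
    and iso: "lie_iso sc V br (pbg_sc sc) (pbg_carrier H1 H2 n1 n2) (pbg_br sc br X1 n1 X2 n2)"
    using \<open>product_by_generators sc V br\<close> unfolding product_by_generators_def by blast
  have "2 \<le> n1" "2 \<le> n2"
    using adapted_basis_two_le_generators[OF la H(1) nonab(1) X(1)]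
      adapted_basis_two_le_generators[OF la H(2) nonab(2) X(2)] by auto
  moreover have "n1 < length X1" "n2 < length X2"
    using adapted_basis_generators_less_length[OF \<open>module sc\<close> nonab(1) X(1)]
      adapted_basis_generators_less_length[OF \<open>module sc\<close> nonab(2) X(2)] by auto
  moreover have "4 \<le> n1 * n2" using mult_le_mono[OF \<open>2 \<le> n1\<close> \<open>2 \<le> n2\<close>] by simp
  ultimately show ?thesis using lie_iso_pbg_dim_ge[OF la H X iso] by linarith
qed

end
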